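(* Let $A=\mathbb{C}[x,y,z]$, let $s,t\in A\setminus\{0\}$ be coprime and equip $A$ with the Poisson bracket determined by $\{x,y\}=t s_z-s t_z$, $\{y,z\}=t s_x-s t_x$, $\{z,x\}=t s_y-s t_y$. For $(\lambda,\mu)\in\mathbb{P}^1(\mathbb{C})$ put $f_{\lambda,\mu}=\lambda s-\mu t$. Then the Poisson prime ideals of $A$ are exactly: $0$; the residually null Poisson prime ideals; and the height one prime ideals $uA$, where $u$ is an irreducible factor of $f_{\lambda,\mu}$ for some $(\lambda,\mu)\in\mathbb{P}^1(\mathbb{C})$ such that $f_{\lambda,\mu}$ is a non-zero non-unit.
   Context: Subscripts denote partial derivatives. A Poisson prime ideal is a prime ideal $P$ with $\{a,P\}\subseteq P$ for all $a\in A$. A Poisson ideal $I$ is residually null if the induced bracket on $A/I$ is zero, equivalently $I$ contains $\{x,y\},\{y,z\},\{z,x\}$; thus the residually null Poisson primes are exactly the prime ideals containing these three elements. *)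

theory Defs
  imports Complex_Main "HOL-Computational_Algebra.Computational_Algebra"
begin

text \<open>The polynomial ring A = C[x,y,z] is represented as iterated univariate
polynomials: complex poly poly poly, where the outermost variable is x,
the middle one is y and the innermost one is z.\<close>

type_synonym cpoly3 = "complex poly poly poly"

definition X :: cpoly3 where "X = [:0, 1:]"
definition Y :: cpoly3 where "Y = [:[:0, 1:]:]"
definition Z :: cpoly3 where "Z = [:[:[:0, 1:]:]:]"

definition const3 :: "complex \<Rightarrow> cpoly3" where "const3 c = [:[:[:c:]:]:]"

definition dx :: "cpoly3 \<Rightarrow> cpoly3" where "dx p = pderiv p"
definition dy :: "cpoly3 \<Rightarrow> cpoly3" where "dy p = map_poly pderiv p"
definition dz :: "cpoly3 \<Rightarrow> cpoly3" where "dz p = map_poly (map_poly pderiv) p"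

text \<open>The Jacobian-type Poisson bracket determined by the values
{x,y} = t s_z - s t_z, {y,z} = t s_x - s t_x, {z,x} = t s_y - s t_y
(the unique biderivation with these values on the generators).\<close>

definition bxy :: "cpoly3 \<Rightarrow> cpoly3 \<Rightarrow> cpoly3" where
  "bxy s t = t * dz s - s * dz t"
definition byz :: "cpoly3 \<Rightarrow> cpoly3 \<Rightarrow> cpoly3" where
  "byz s t = t * dx s - s * dx t"
definition bzx :: "cpoly3 \<Rightarrow> cpoly3 \<Rightarrow> cpoly3" where
  "bzx s t = t * dy s - s * dy t"

definition pbr :: "cpoly3 \<Rightarrow> cpoly3 \<Rightarrow> cpoly3 \<Rightarrow> cpoly3 \<Rightarrow> cpoly3" where
  "pbr s t a b =
     bxy s t * (dx a * dy b - dy a * dx b)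
   + byz s t * (dy a * dz b - dz a * dy b)
   + bzx s t * (dz a * dx b - dx a * dz b)"

definition is_ideal :: "'a::comm_ring_1 set \<Rightarrow> bool" where
  "is_ideal I \<longleftrightarrow> 0 \<in> I \<and> (\<forall>a\<in>I. \<forall>b\<in>I. a + b \<in> I) \<and> (\<forall>r. \<forall>a\<in>I. r * a \<in> I)"

definition is_prime_ideal :: "'a::comm_ring_1 set \<Rightarrow> bool" where
  "is_prime_ideal P \<longleftrightarrow> is_ideal P \<and> P \<noteq> UNIV \<and> (\<forall>a b. a * b \<in> P \<longrightarrow> a \<in> P \<or> b \<in> P)"

definition principal_ideal :: "'a::comm_ring_1 \<Rightarrow> 'a set" where
  "principal_ideal u = {u * a | a. True}"

definition poisson_prime :: "cpoly3 \<Rightarrow> cpoly3 \<Rightarrow> cpoly3 set \<Rightarrow> bool" where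
  "poisson_prime s t P \<longleftrightarrow> is_prime_ideal P \<and> (\<forall>a. \<forall>p\<in>P. pbr s t a p \<in> P)"

definition residually_null :: "cpoly3 \<Rightarrow> cpoly3 \<Rightarrow> cpoly3 set \<Rightarrow> bool" where
  "residually_null s t P \<longleftrightarrow> pbr s t X Y \<in> P \<and> pbr s t Y Z \<in> P \<and> pbr s t Z X \<in> P"

definition fpencil :: "cpoly3 \<Rightarrow> cpoly3 \<Rightarrow> complex \<Rightarrow> complex \<Rightarrow> cpoly3" where
  "fpencil s t l m = const3 l * s - const3 m * t"

end

theory Submission
  imports Defs "HOL-Computational_Algebra.Field_as_Ring"
begin

(* Every f = \<lambda>s - \<mu>t is a Darboux polynomial of the bracket: {a, f} = f \<cdot> Jac(s, a, t), so f divides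
   {a, f}, and then so does every prime factor u of f for {a, u}; hence uA is a Poisson prime.

   Conversely, let P \<noteq> 0 be a Poisson prime that is not residually null. A permutation of the
   variables reverses the bracket, so we may assume {y,z} \<notin> P. The Hamiltonian derivations of y
   and z then show P \<inter> C[y,z] = 0, so P = uA for a primitive irreducible u of positive x-degree d.
   If u does not divide t, the d + 1 products s^j t^(d-j) are linearly dependent modulo u over
   C[y,z]; take such a relation \<Sum> a_j s^j t^(k-j) of minimal degree k. The derivations
   u_x \<partial>_y - u_y \<partial>_x and u_x \<partial>_z - u_z \<partial>_x annihilate u and, since P is Poisson, carry the
   relation to the one with differentiated coefficients; minimality makes all a_j proportional with
   constant ratios. So u divides a binary form in s, t with complex coefficients, which splits into
   linear factors s - r t by the fundamental theorem of algebra. *)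

definition derivation :: "('a::comm_ring_1 \<Rightarrow> 'a) \<Rightarrow> bool" where
  "derivation D \<longleftrightarrow> (\<forall>p q. D (p + q) = D p + D q) \<and> (\<forall>p q. D (p * q) = D p * q + p * D q)"

lemma derivation_add: "derivation D \<Longrightarrow> D (p + q) = D p + D q"
  by (simp add: derivation_def)

lemma derivation_mult: "derivation D \<Longrightarrow> D (p * q) = D p * q + p * D q"
  by (simp add: derivation_def)

lemma derivation_0: "derivation D \<Longrightarrow> D 0 = 0"
  using derivation_add[of D 0 0] by simp

lemma derivation_1: "derivation D \<Longrightarrow> D 1 = 0"
  using derivation_mult[of D 1 1] by simp

lemma derivation_uminus: "derivation D \<Longrightarrow> D (- p) = - D p"
  using derivation_add[of D p "- p"] derivation_0[of D] by (simp add: eq_neg_iff_add_eq_0 add.commute)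

lemma derivation_diff: "derivation D \<Longrightarrow> D (p - q) = D p - D q"
  using derivation_add[of D p "- q"] derivation_uminus[of D q] by simp

lemma derivation_power: "derivation D \<Longrightarrow> D (p ^ Suc n) = of_nat (Suc n) * p ^ n * D p"
  by (induction n) (simp_all add: derivation_mult algebra_simps)

lemma derivation_power_product:
  assumes E: "derivation E"
  shows "t * E (s ^ j * t ^ i) = of_nat (j + i) * E t * (s ^ j * t ^ i)
            + of_nat j * s ^ (j - 1) * t ^ i * (t * E s - s * E t)"
proof (cases j)
  case 0
  then show ?thesis
  proof (cases i)
    case (Suc i')
    then show ?thesis using \<open>j = 0\<close> derivation_power[OF E, of t i'] by (simp add: algebra_simps)
  qed (simp add: derivation_1[OF E])
next
  case (Suc j')
  note ps = derivation_power[OF E, of s j']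
  show ?thesis
  proof (cases i)
    case 0
    then show ?thesis using Suc ps by (simp add: algebra_simps)
  next
    case (Suc i')
    have "E (s ^ Suc j' * t ^ Suc i') = (of_nat (Suc j') * s ^ j' * E s) * t ^ Suc i'
        + s ^ Suc j' * (of_nat (Suc i') * t ^ i' * E t)"
      by (simp only: derivation_mult[OF E] ps derivation_power[OF E])
    then show ?thesis unfolding \<open>j = Suc j'\<close> Suc by (simp add: algebra_simps)
  qed
qed

lemma derivation_sum: "derivation D \<Longrightarrow> D (sum f A) = (\<Sum>i\<in>A. D (f i))"
  using sum_comp_morphism[of D f A] by (simp add: derivation_0 derivation_add o_def)

lemma derivation_plus: "derivation D1 \<Longrightarrow> derivation D2 \<Longrightarrow> derivation (\<lambda>p. D1 p + D2 p)"
  by (simp add: derivation_def algebra_simps)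

lemma derivation_cmult: "derivation D \<Longrightarrow> derivation (\<lambda>p. c * D p)"
  by (simp add: derivation_def algebra_simps)

lemma derivation_pderiv: "derivation pderiv"
  by (simp add: derivation_def pderiv_add pderiv_mult algebra_simps)

lemma derivation_map_poly:
  assumes D: "derivation D"
  shows "derivation (map_poly D)"
proof -
  have "map_poly D (p * q) = map_poly D p * q + p * map_poly D q" for p q
  proof (rule poly_eqI)
    fix n
    have "coeff (map_poly D (p * q)) n = (\<Sum>i\<le>n. D (coeff p i * coeff q (n - i)))"
      by (simp add: coeff_map_poly derivation_0[OF D] coeff_mult derivation_sum[OF D])
    also have "\<dots> = coeff (map_poly D p * q + p * map_poly D q) n"
      by (simp add: derivation_mult[OF D] sum.distrib coeff_mult coeff_map_poly derivation_0[OF D])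
    finally show "coeff (map_poly D (p * q)) n = coeff (map_poly D p * q + p * map_poly D q) n" .
  qed
  moreover have "map_poly D (p + q) = map_poly D p + map_poly D q" for p q
    by (rule poly_eqI) (simp add: coeff_map_poly derivation_0[OF D] derivation_add[OF D])
  ultimately show ?thesis
    by (simp add: derivation_def)
qed

lemma map_poly_derivation_smult:
  "derivation D \<Longrightarrow> map_poly D (smult c p) = smult (D c) p + smult c (map_poly D p)"
  using derivation_mult[OF derivation_map_poly, of D "[:c:]" p]
  by (simp add: map_poly_pCons derivation_0)

lemma ideal_add: "is_ideal I \<Longrightarrow> a \<in> I \<Longrightarrow> b \<in> I \<Longrightarrow> a + b \<in> I"
  and ideal_mult: "is_ideal I \<Longrightarrow> a \<in> I \<Longrightarrow> r * a \<in> I"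
  by (simp_all add: is_ideal_def)

lemma ideal_uminus: "is_ideal I \<Longrightarrow> a \<in> I \<Longrightarrow> - a \<in> I"
  using ideal_mult[of I a "- 1"] by simp

lemma prime_idealD:
  assumes "is_prime_ideal P"
  shows "is_ideal P" and "1 \<notin> P" and "a * b \<in> P \<Longrightarrow> a \<in> P \<or> b \<in> P"
proof -
  show I: "is_ideal P" using assms by (simp add: is_prime_ideal_def)
  show "1 \<notin> P"
    using assms ideal_mult[OF I, of 1] by (auto simp: is_prime_ideal_def)
  show "a * b \<in> P \<Longrightarrow> a \<in> P \<or> b \<in> P" using assms by (simp add: is_prime_ideal_def)
qed

lemma mem_principal_ideal: "x \<in> principal_ideal u \<longleftrightarrow> u dvd x"
  by (auto simp: principal_ideal_def dvd_def)

lemma is_prime_ideal_principal: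
  assumes "prime_elem u"
  shows "is_prime_ideal (principal_ideal u)"
proof -
  have "1 \<notin> principal_ideal u" using assms by (auto simp: mem_principal_ideal prime_elem_def)
  then show ?thesis using assms
    by (auto simp: is_prime_ideal_def is_ideal_def mem_principal_ideal prime_elem_dvd_mult_iff)
qed

lemma irreducible_of_minimal_degree:
  fixes u :: "'a::factorial_ring_gcd poly"
  assumes P: "is_prime_ideal P" and u: "u \<in> P" "content u = 1"
    and minimal: "\<And>p. p \<in> P \<Longrightarrow> p \<noteq> 0 \<Longrightarrow> degree u \<le> degree p"
  shows "irreducible u"
proof (rule irreducibleI)
  show u0: "u \<noteq> 0" using u(2) by auto
  show "\<not> is_unit u"
  proof
    assume "is_unit u"
    then obtain v where "1 = v * u" by (auto simp: dvd_def mult.commute)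
    then show False using ideal_mult[OF prime_idealD(1)[OF P] u(1), of v] prime_idealD(2)[OF P] by simp
  qed
  have constant_factor: "is_unit c" if "degree c = 0" "c dvd u" for c
  proof -
    obtain k where c: "c = [:k:]" using \<open>degree c = 0\<close> by (rule degree_eq_zeroE)
    then have "k dvd content u" using \<open>c dvd u\<close> by (simp add: const_poly_dvd_iff_dvd_content)
    then show ?thesis using u(2) by (simp add: c is_unit_poly_iff)
  qed
  fix a b
  assume ab: "u = a * b"
  then have "a \<noteq> 0" "b \<noteq> 0" "degree u = degree a + degree b"
    using u0 by (auto simp: degree_mult_eq)
  moreover have "a \<in> P \<or> b \<in> P" using prime_idealD(3)[OF P] u(1) ab by simp
  ultimately have "degree b = 0 \<or> degree a = 0" using minimal by fastforce
  then show "is_unit a \<or> is_unit b" using constant_factor ab by auto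
qed

lemma principal_ideal_of_minimal_degree:
  fixes u :: "'a::idom poly"
  assumes I: "is_ideal I" and u: "u \<in> I" "prime_elem u" "degree u \<ge> 1"
    and minimal: "\<And>p. p \<in> I \<Longrightarrow> p \<noteq> 0 \<Longrightarrow> degree u \<le> degree p"
  shows "I = principal_ideal u"
proof (intro set_eqI iffI)
  fix p
  assume p: "p \<in> I"
  have u0: "u \<noteq> 0" using u(2) by auto
  obtain a q where a: "a \<noteq> 0" and pseudo: "smult a p = u * q + pseudo_mod p u"
    using pseudo_mod(1)[OF u0, of p] by blast
  have "pseudo_mod p u = [:a:] * p + (- q) * u" using pseudo by simp
  then have "pseudo_mod p u \<in> I" using ideal_add ideal_mult I p u(1) by metis
  then have "pseudo_mod p u = 0"
    using minimal pseudo_mod(2)[OF u0, of p] by fastforce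
  then have "u dvd [:a:] * p" using pseudo by simp
  moreover have "\<not> u dvd [:a:]"
    using dvd_imp_degree_le[of u "[:a:]"] a u(3) by auto
  ultimately have "u dvd p" using u(2) prime_elem_dvd_mult_iff by blast
  then show "p \<in> principal_ideal u" by (simp add: mem_principal_ideal)
next
  fix p
  assume "p \<in> principal_ideal u"
  then obtain q where "p = q * u" by (auto simp: mem_principal_ideal dvd_def mult.commute)
  then show "p \<in> I" using ideal_mult[OF I u(1)] by simp
qed

lemma derivation_dx: "derivation dx"
  and derivation_dy: "derivation dy"
  and derivation_dz: "derivation dz"
  unfolding dx_def[abs_def] dy_def[abs_def] dz_def[abs_def]
  by (intro derivation_map_poly derivation_pderiv)+

lemma dx_X: "dx X = 1" and dy_X: "dy X = 0" and dz_X: "dz X = 0"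
  and dx_Y: "dx Y = 0" and dy_Y: "dy Y = 1" and dz_Y: "dz Y = 0"
  and dx_Z: "dx Z = 0" and dy_Z: "dy Z = 0" and dz_Z: "dz Z = 1"
  by (simp_all add: dx_def dy_def dz_def X_def Y_def Z_def pderiv_pCons one_pCons map_poly_pCons)

lemma dx_const: "dx [:q:] = 0"
  and dy_const: "dy [:q:] = [:pderiv q:]"
  and dz_const: "dz [:q:] = [:map_poly pderiv q:]"
  by (simp_all add: dx_def dy_def dz_def pderiv_pCons map_poly_pCons)

lemma dx_const3: "dx (const3 c) = 0"
  and dy_const3: "dy (const3 c) = 0"
  and dz_const3: "dz (const3 c) = 0"
  by (simp_all add: const3_def dx_const dy_const dz_const pderiv_pCons map_poly_pCons)

lemmas d_generators = dx_X dy_X dz_X dx_Y dy_Y dz_Y dx_Z dy_Z dz_Z dx_const3 dy_const3 dz_const3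

lemma const3_mult: "const3 a * const3 b = const3 (a * b)"
  by (simp add: const3_def)

lemma const3_add: "const3 a + const3 b = const3 (a + b)"
  by (simp add: const3_def)

lemma const3_0: "const3 0 = 0"
  and const3_1: "const3 1 = 1"
  by (simp_all add: const3_def one_pCons)

lemma const3_eq_0_iff: "const3 c = 0 \<longleftrightarrow> c = 0"
  by (simp add: const3_def)

lemma is_unit_const3: "c \<noteq> 0 \<Longrightarrow> is_unit (const3 c)"
  by (rule dvdI[of _ _ "const3 (1 / c)"]) (simp add: const3_mult const3_1)

lemma is_unit_of_nat_cpoly3: "n > 0 \<Longrightarrow> is_unit (of_nat n :: cpoly3)"
  by (simp add: of_nat_poly const3_def[symmetric] is_unit_const3)

lemma pbr_linear_right: "pbr s t a b =
    (bzx s t * dz a - bxy s t * dy a) * dx b + (bxy s t * dx a - byz s t * dz a) * dy b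
  + (byz s t * dy a - bzx s t * dx a) * dz b"
  by (simp add: pbr_def algebra_simps)

lemma derivation_pbr: "derivation (pbr s t a)"
  unfolding pbr_linear_right[abs_def]
  by (intro derivation_plus derivation_cmult derivation_dx derivation_dy derivation_dz)

lemma pbr_X: "pbr s t X p = bxy s t * dy p - bzx s t * dz p"
  and pbr_Y: "pbr s t Y p = byz s t * dz p - bxy s t * dx p"
  and pbr_Z: "pbr s t Z p = bzx s t * dx p - byz s t * dy p"
  by (simp_all add: pbr_def d_generators algebra_simps)

lemma pbr_XY: "pbr s t X Y = bxy s t"
  and pbr_YZ: "pbr s t Y Z = byz s t"
  and pbr_ZX: "pbr s t Z X = bzx s t"
  by (simp_all add: pbr_X pbr_Y pbr_Z d_generators)

lemma derivation_fpencil: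
  assumes "derivation D" "D (const3 l) = 0" "D (const3 m) = 0"
  shows "D (fpencil s t l m) = const3 l * D s - const3 m * D t"
  by (simp add: fpencil_def derivation_diff[OF assms(1)] derivation_mult[OF assms(1)] assms)

text \<open>The cofactor is the Jacobian determinant of \<open>(s, a, t)\<close>; the bracket itself is
  \<open>{a, b} = t Jac(s, a, b) - s Jac(t, a, b)\<close>.\<close>

lemma fpencil_dvd_pbr: "fpencil s t l m dvd pbr s t a (fpencil s t l m)"
proof (rule dvdI)
  show "pbr s t a (fpencil s t l m) = fpencil s t l m *
          (dz s * (dx a * dy t - dy a * dx t) + dx s * (dy a * dz t - dz a * dy t)
         + dy s * (dz a * dx t - dx a * dz t))"
    unfolding pbr_def bxy_def byz_def bzx_def
    by (simp add: derivation_fpencil derivation_dx derivation_dy derivation_dz d_generators)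
       (simp add: fpencil_def algebra_simps)
qed

section \<open>Poisson primes generated by a Darboux polynomial\<close>

lemma darboux_prime_factor:
  fixes D :: "'a::{factorial_semiring,idom} \<Rightarrow> 'a"
  assumes D: "derivation D" and f0: "f \<noteq> 0" and darboux: "f dvd D f"
    and u: "prime_elem u" "u dvd f"
    and char0: "\<And>n. n > 0 \<Longrightarrow> is_unit (of_nat n :: 'a)"
  shows "u dvd D u"
proof -
  have nu: "\<not> is_unit u" using u(1) by (simp add: prime_elem_def)
  define k where "k = multiplicity u f"
  obtain g where f: "f = u ^ k * g" and ug: "\<not> u dvd g"
    using multiplicity_decompose'[OF f0 nu] unfolding k_def by metis
  have "k > 0" using u(2) multiplicity_gt_zero_iff[OF f0 nu] by (simp add: k_def)
  then obtain j where k: "k = Suc j" using gr0_conv_Suc by blast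
  have Df: "D f = u ^ j * (of_nat k * D u * g) + u ^ k * D g"
    unfolding f derivation_mult[OF D] k derivation_power[OF D] by (simp add: algebra_simps)
  have "u ^ k dvd D f" using darboux f by (metis dvd_mult_left dvd_trans)
  then have "u ^ k dvd u ^ j * (of_nat k * D u * g)"
    unfolding Df by (simp add: dvd_add_left_iff)
  then have "u ^ j * u dvd u ^ j * (of_nat k * D u * g)"
    by (simp only: k power_Suc2)
  moreover have "u \<noteq> 0" using u(1) by auto
  ultimately have "u dvd of_nat k * D u * g" by simp
  moreover have "\<not> u dvd of_nat k"
    using char0[OF \<open>k > 0\<close>] nu dvd_unit_imp_unit by blast
  ultimately show ?thesis using u(1) ug by (simp add: prime_elem_dvd_mult_iff)
qed

lemma poisson_prime_principal:
  assumes u: "prime_elem u" and hamiltonian: "\<And>a. u dvd pbr s t a u"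
  shows "poisson_prime s t (principal_ideal u)"
proof -
  have "u dvd pbr s t a (u * q)" for a q
    using hamiltonian[of a] by (simp add: derivation_mult[OF derivation_pbr])
  then show ?thesis using is_prime_ideal_principal[OF u]
    by (auto simp: poisson_prime_def mem_principal_ideal dvd_def)
qed

lemma poisson_prime_zero: "poisson_prime s t {0}"
proof -
  have "{0} \<noteq> (UNIV :: cpoly3 set)" by (metis UNIV_I singletonD zero_neq_one)
  then have "is_prime_ideal ({0} :: cpoly3 set)"
    by (auto simp: is_prime_ideal_def is_ideal_def)
  then show ?thesis by (simp add: poisson_prime_def derivation_0[OF derivation_pbr])
qed

lemma poisson_prime_pencil_factor:
  assumes "fpencil s t l m \<noteq> 0" "irreducible u" "u dvd fpencil s t l m"
  shows "poisson_prime s t (principal_ideal u)"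
proof (rule poisson_prime_principal)
  show u: "prime_elem u" using assms(2) by (simp add: prime_elem_iff_irreducible)
  show "u dvd pbr s t a u" for a
    by (rule darboux_prime_factor[OF derivation_pbr assms(1) fpencil_dvd_pbr u assms(3)
          is_unit_of_nat_cpoly3])
qed

definition pencil_factor_ideal :: "cpoly3 \<Rightarrow> cpoly3 \<Rightarrow> cpoly3 set \<Rightarrow> bool" where
  "pencil_factor_ideal s t P \<longleftrightarrow> (\<exists>l m u. (l, m) \<noteq> (0, 0) \<and> fpencil s t l m \<noteq> 0
     \<and> \<not> is_unit (fpencil s t l m) \<and> irreducible u \<and> u dvd fpencil s t l m \<and> P = principal_ideal u)"

section \<open>Permuting the variables\<close>

definition ring_homomorphism :: "('a::comm_ring_1 \<Rightarrow> 'b::comm_ring_1) \<Rightarrow> bool" where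
  "ring_homomorphism F \<longleftrightarrow>
     F 0 = 0 \<and> F 1 = 1 \<and> (\<forall>a b. F (a + b) = F a + F b) \<and> (\<forall>a b. F (a * b) = F a * F b)"

lemma ring_homomorphism_simps:
  assumes "ring_homomorphism F"
  shows "F (p + q) = F p + F q" "F (p * q) = F p * F q" "F 0 = 0" "F 1 = 1"
    "F (- p) = - F p" "F (p - q) = F p - F q" "F (p ^ n) = F p ^ n"
proof -
  show hom: "F (p + q) = F p + F q" "F (p * q) = F p * F q" "F 0 = 0" "F 1 = 1"
    using assms by (auto simp: ring_homomorphism_def)
  have add: "F (p + q) = F p + F q" for p q using assms by (simp add: ring_homomorphism_def)
  have uminus: "F (- x) = - F x" for x
    using add[of x "- x"] hom(3) by (simp add: eq_neg_iff_add_eq_0 add.commute)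
  show "F (- p) = - F p" by (rule uminus)
  show "F (p - q) = F p - F q" using add[of p "- q"] uminus[of q] by simp
  show "F (p ^ n) = F p ^ n" using assms by (induction n) (auto simp: ring_homomorphism_def)
qed

lemma ring_homomorphism_comp:
  "ring_homomorphism F \<Longrightarrow> ring_homomorphism G \<Longrightarrow> ring_homomorphism (\<lambda>p. F (G p))"
  by (simp add: ring_homomorphism_def)

lemma ring_homomorphism_id: "ring_homomorphism (\<lambda>p. p)"
  by (simp add: ring_homomorphism_def)

lemma ring_homomorphism_eval_map_poly:
  assumes F: "ring_homomorphism F"
  shows "ring_homomorphism (\<lambda>p. poly (map_poly F p) v)"
proof -
  have F0: "F 0 = 0" and Fadd: "\<And>a b. F (a + b) = F a + F b"
    and Fmult: "\<And>a b. F (a * b) = F a * F b"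
    using F by (auto simp: ring_homomorphism_def)
  have "map_poly F (p * q) = map_poly F p * map_poly F q" for p q
  proof (rule poly_eqI)
    fix n
    have "coeff (map_poly F (p * q)) n = F (\<Sum>i\<le>n. coeff p i * coeff q (n - i))"
      by (simp add: coeff_map_poly F0 coeff_mult)
    also have "\<dots> = (\<Sum>i\<le>n. F (coeff p i * coeff q (n - i)))"
      by (simp add: sum_comp_morphism[of F, OF F0 Fadd, symmetric] o_def)
    also have "\<dots> = coeff (map_poly F p * map_poly F q) n"
      by (simp add: coeff_mult coeff_map_poly F0 Fmult)
    finally show "coeff (map_poly F (p * q)) n = coeff (map_poly F p * map_poly F q) n" .
  qed
  moreover have "map_poly F (p + q) = map_poly F p + map_poly F q" for p q
    by (rule poly_eqI) (simp add: coeff_map_poly F0 Fadd)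
  ultimately show ?thesis using F
    by (simp add: ring_homomorphism_def map_poly_pCons one_pCons)
qed

text \<open>The substitution \<open>x, y, z \<mapsto> a, b, c\<close>.\<close>

definition subst3 :: "cpoly3 \<Rightarrow> cpoly3 \<Rightarrow> cpoly3 \<Rightarrow> cpoly3 \<Rightarrow> cpoly3" where
  "subst3 a b c p =
     poly (map_poly (\<lambda>q. poly (map_poly (\<lambda>r. poly (map_poly const3 r) c) q) b) p) a"

lemma ring_homomorphism_subst3: "ring_homomorphism (subst3 a b c)"
  unfolding subst3_def[abs_def]
  by (intro ring_homomorphism_eval_map_poly) (simp add: ring_homomorphism_def const3_def one_pCons)

lemma subst3_X: "subst3 a b c X = a"
  and subst3_Y: "subst3 a b c Y = b"
  and subst3_Z: "subst3 a b c Z = c"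
  and subst3_const3: "subst3 a b c (const3 k) = const3 k"
  by (simp_all add: subst3_def X_def Y_def Z_def const3_def map_poly_pCons one_pCons[symmetric])

lemma cpoly3_induct [case_names add mult X Y Z const]:
  fixes Q :: "cpoly3 \<Rightarrow> bool"
  assumes add: "\<And>p q. Q p \<Longrightarrow> Q q \<Longrightarrow> Q (p + q)"
    and mult: "\<And>p q. Q p \<Longrightarrow> Q q \<Longrightarrow> Q (p * q)"
    and X: "Q X" and Y: "Q Y" and Z: "Q Z" and const: "\<And>c. Q (const3 c)"
  shows "Q p"
proof -
  have zero: "Q 0" using const[of 0] by (simp add: const3_0)
  have z_poly: "Q [:[:r:]:]" for r
  proof (induction r rule: pCons_induct)
    case (pCons c r)
    have "[:[:pCons c r:]:] = const3 c + Z * [:[:r:]:]" by (simp add: const3_def Z_def)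
    then show ?case using add[OF const mult[OF Z pCons(2)]] by simp
  qed (use zero in simp)
  have yz_poly: "Q [:q:]" for q
  proof (induction q rule: pCons_induct)
    case (pCons r q)
    have "[:pCons r q:] = [:[:r:]:] + Y * [:q:]" by (simp add: Y_def)
    then show ?case using add[OF z_poly mult[OF Y pCons(2)]] by simp
  qed (use zero in simp)
  show "Q p"
  proof (induction p rule: pCons_induct)
    case (pCons q p)
    have "pCons q p = [:q:] + X * p" by (simp add: X_def)
    then show ?case using add[OF yz_poly mult[OF X pCons(2)]] by simp
  qed (use zero in simp)
qed

lemma ring_homomorphism_cpoly3_eqI:
  fixes F G :: "cpoly3 \<Rightarrow> cpoly3"
  assumes F: "ring_homomorphism F" and G: "ring_homomorphism G"
    and "F X = G X" "F Y = G Y" "F Z = G Z" "\<And>c. F (const3 c) = G (const3 c)"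
  shows "F p = G p"
  by (induction p rule: cpoly3_induct)
     (simp_all add: ring_homomorphism_simps[OF F] ring_homomorphism_simps[OF G] assms)

lemma derivation_ring_homomorphism_commute:
  fixes F :: "cpoly3 \<Rightarrow> cpoly3"
  assumes D1: "derivation D1" and D2: "derivation D2" and F: "ring_homomorphism F"
    and "D1 (F X) = F (D2 X)" "D1 (F Y) = F (D2 Y)" "D1 (F Z) = F (D2 Z)"
    "\<And>c. D1 (F (const3 c)) = F (D2 (const3 c))"
  shows "D1 (F p) = F (D2 p)"
  by (induction p rule: cpoly3_induct)
     (simp_all add: ring_homomorphism_simps[OF F] derivation_add[OF D1] derivation_add[OF D2]
        derivation_mult[OF D1] derivation_mult[OF D2] assms)

definition swap_xy :: "cpoly3 \<Rightarrow> cpoly3" where "swap_xy = subst3 Y X Z"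
definition swap_xz :: "cpoly3 \<Rightarrow> cpoly3" where "swap_xz = subst3 Z Y X"

lemma ring_homomorphism_swap_xy: "ring_homomorphism swap_xy"
  and ring_homomorphism_swap_xz: "ring_homomorphism swap_xz"
  by (simp_all add: swap_xy_def swap_xz_def ring_homomorphism_subst3)

lemma swap_xy_generators: "swap_xy X = Y" "swap_xy Y = X" "swap_xy Z = Z" "swap_xy (const3 c) = const3 c"
  and swap_xz_generators: "swap_xz X = Z" "swap_xz Y = Y" "swap_xz Z = X" "swap_xz (const3 c) = const3 c"
  by (simp_all add: swap_xy_def swap_xz_def subst3_X subst3_Y subst3_Z subst3_const3)

lemma swap_xy_swap_xy: "swap_xy (swap_xy p) = p"
  by (rule ring_homomorphism_cpoly3_eqI[OF ring_homomorphism_comp ring_homomorphism_id])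
     (simp_all add: ring_homomorphism_swap_xy swap_xy_generators)

lemma swap_xz_swap_xz: "swap_xz (swap_xz p) = p"
  by (rule ring_homomorphism_cpoly3_eqI[OF ring_homomorphism_comp ring_homomorphism_id])
     (simp_all add: ring_homomorphism_swap_xz swap_xz_generators)

lemma d_swap_xy: "dx (swap_xy p) = swap_xy (dy p)" "dy (swap_xy p) = swap_xy (dx p)"
    "dz (swap_xy p) = swap_xy (dz p)"
  by (rule derivation_ring_homomorphism_commute[OF _ _ ring_homomorphism_swap_xy];
      simp add: derivation_dx derivation_dy derivation_dz swap_xy_generators d_generators
        ring_homomorphism_simps[OF ring_homomorphism_swap_xy])+

lemma d_swap_xz: "dx (swap_xz p) = swap_xz (dz p)" "dy (swap_xz p) = swap_xz (dy p)"
    "dz (swap_xz p) = swap_xz (dx p)"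
  by (rule derivation_ring_homomorphism_commute[OF _ _ ring_homomorphism_swap_xz];
      simp add: derivation_dx derivation_dy derivation_dz swap_xz_generators d_generators
        ring_homomorphism_simps[OF ring_homomorphism_swap_xz])+

locale bracket_reversing_involution =
  fixes F :: "cpoly3 \<Rightarrow> cpoly3"
  assumes hom: "ring_homomorphism F"
    and involutive: "\<And>p. F (F p) = p"
    and fixes_const3: "\<And>c. F (const3 c) = const3 c"
    and pbr_reversed: "\<And>s t a b. pbr (F s) (F t) (F a) (F b) = - F (pbr s t a b)"
begin

lemmas hom_simps = ring_homomorphism_simps[OF hom]

lemma mem_image_iff: "p \<in> F ` P \<longleftrightarrow> F p \<in> P"
  by (metis image_iff involutive)

lemma eq_0_iff: "F p = 0 \<longleftrightarrow> p = 0"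
  by (metis hom_simps(3) involutive)

lemma dvd_iff: "F a dvd F b \<longleftrightarrow> a dvd b"
proof
  assume "F a dvd F b"
  then obtain c where "F b = F a * c" by (auto simp: dvd_def)
  then have "b = a * F c" by (metis hom_simps(2) involutive)
  then show "a dvd b" by simp
qed (auto simp: dvd_def hom_simps)

lemma is_unit_iff: "is_unit (F a) \<longleftrightarrow> is_unit a"
  using dvd_iff[of a 1] by (simp add: hom_simps)

lemma irreducible_image:
  assumes "irreducible a"
  shows "irreducible (F a)"
proof (rule irreducibleI)
  show "F a \<noteq> 0" "\<not> is_unit (F a)"
    using assms by (simp_all add: eq_0_iff is_unit_iff irreducible_def)
  fix b c
  assume "F a = b * c"
  then have "a = F b * F c" by (metis hom_simps(2) involutive)
  then have "is_unit (F b) \<or> is_unit (F c)" using assms by (simp add: irreducible_def)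
  then show "is_unit b \<or> is_unit c" by (simp add: is_unit_iff)
qed

lemma image_principal_ideal: "F ` principal_ideal u = principal_ideal (F u)"
proof -
  have "p \<in> F ` principal_ideal u \<longleftrightarrow> p \<in> principal_ideal (F u)" for p
    using dvd_iff[of u "F p"] by (simp add: mem_image_iff mem_principal_ideal involutive)
  then show ?thesis by blast
qed

lemma is_prime_ideal_image:
  assumes "is_prime_ideal P"
  shows "is_prime_ideal (F ` P)"
proof -
  have "0 \<in> P" "\<And>a b. a \<in> P \<Longrightarrow> b \<in> P \<Longrightarrow> a + b \<in> P" "\<And>r a. a \<in> P \<Longrightarrow> r * a \<in> P"
    "P \<noteq> UNIV" "\<And>a b. a * b \<in> P \<Longrightarrow> a \<in> P \<or> b \<in> P"
    using assms by (auto simp: is_prime_ideal_def is_ideal_def)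
  then show ?thesis
    unfolding is_prime_ideal_def is_ideal_def mem_image_iff hom_simps
    by (metis mem_image_iff involutive UNIV_I subsetI subset_antisym)
qed

lemma poisson_prime_image:
  assumes "poisson_prime s t P"
  shows "poisson_prime (F s) (F t) (F ` P)"
proof -
  have P: "is_prime_ideal P" and bracket: "\<And>a p. p \<in> P \<Longrightarrow> pbr s t a p \<in> P"
    using assms by (auto simp: poisson_prime_def)
  have "pbr (F s) (F t) a p \<in> F ` P" if "p \<in> F ` P" for a p
  proof -
    have "F p \<in> P" using that by (simp add: mem_image_iff)
    then have "- pbr s t (F a) (F p) \<in> P"
      using ideal_uminus[OF prime_idealD(1)[OF P]] bracket by blast
    moreover have "pbr (F s) (F t) a p = - F (pbr s t (F a) (F p))"
      using pbr_reversed[of s t "F a" "F p"] by (simp add: involutive)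
    ultimately show ?thesis by (simp add: mem_image_iff hom_simps involutive)
  qed
  then show ?thesis using is_prime_ideal_image[OF P] by (simp add: poisson_prime_def)
qed

lemma image_image_eq: "F ` F ` P = P"
  by (simp add: image_image involutive)

lemma image_eq_zero_iff: "F ` P = {0} \<longleftrightarrow> P = {0}"
  by (metis image_empty image_insert image_image_eq hom_simps(3))

lemma pencil_factor_ideal_image:
  assumes "pencil_factor_ideal (F s) (F t) (F ` P)"
  shows "pencil_factor_ideal s t P"
proof -
  obtain l m u where lm: "(l, m) \<noteq> (0, 0)" and f: "fpencil (F s) (F t) l m \<noteq> 0"
    "\<not> is_unit (fpencil (F s) (F t) l m)" "u dvd fpencil (F s) (F t) l m"
    and u: "irreducible u" and P: "F ` P = principal_ideal u"
    using assms unfolding pencil_factor_ideal_def by blast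
  have pencil: "fpencil (F s) (F t) l m = F (fpencil s t l m)"
    unfolding fpencil_def hom_simps by (simp add: fixes_const3)
  have "P = principal_ideal (F u)"
    using arg_cong[OF P, of "image F"] by (simp add: image_image_eq image_principal_ideal)
  moreover have "F u dvd fpencil s t l m"
    using f(3) dvd_iff[of "F u" "fpencil s t l m"] by (simp add: pencil involutive)
  moreover have "fpencil s t l m \<noteq> 0" "\<not> is_unit (fpencil s t l m)"
    using f(1,2) by (simp_all add: pencil eq_0_iff is_unit_iff)
  ultimately show ?thesis
    unfolding pencil_factor_ideal_def using lm irreducible_image[OF u] by blast
qed

end

lemma pbr_swap_xy: "pbr (swap_xy s) (swap_xy t) (swap_xy a) (swap_xy b) = - swap_xy (pbr s t a b)"
  unfolding pbr_def bxy_def byz_def bzx_def d_swap_xy ring_homomorphism_simps[OF ring_homomorphism_swap_xy]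
  by (simp add: algebra_simps)

lemma pbr_swap_xz: "pbr (swap_xz s) (swap_xz t) (swap_xz a) (swap_xz b) = - swap_xz (pbr s t a b)"
  unfolding pbr_def bxy_def byz_def bzx_def d_swap_xz ring_homomorphism_simps[OF ring_homomorphism_swap_xz]
  by (simp add: algebra_simps)

interpretation swap_xy: bracket_reversing_involution swap_xy
  by standard (simp_all add: ring_homomorphism_swap_xy swap_xy_swap_xy swap_xy_generators pbr_swap_xy)

interpretation swap_xz: bracket_reversing_involution swap_xz
  by standard (simp_all add: ring_homomorphism_swap_xz swap_xz_swap_xz swap_xz_generators pbr_swap_xz)

lemma byz_swap_xy: "byz (swap_xy s) (swap_xy t) = swap_xy (bzx s t)"
  by (simp add: byz_def bzx_def d_swap_xy swap_xy.hom_simps)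

lemma byz_swap_xz: "byz (swap_xz s) (swap_xz t) = swap_xz (bxy s t)"
  by (simp add: byz_def bxy_def d_swap_xz swap_xz.hom_simps)

section \<open>Poisson primes avoiding the bracket {y, z}\<close>

locale poisson_prime_byz_notin =
  fixes s t :: cpoly3 and P :: "cpoly3 set"
  assumes poisson: "poisson_prime s t P" and byz_notin: "byz s t \<notin> P"
begin

lemma prime_ideal: "is_prime_ideal P"
  using poisson by (simp add: poisson_prime_def)

lemmas ideal = prime_idealD(1)[OF prime_ideal]

lemma pbr_mem: "p \<in> P \<Longrightarrow> pbr s t a p \<in> P"
  using poisson by (simp add: poisson_prime_def)

lemma const3_notin: "c \<noteq> 0 \<Longrightarrow> const3 c \<notin> P"
  using ideal_mult[OF ideal, of "const3 c" "const3 (1 / c)"] prime_idealD(2)[OF prime_ideal]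
  by (auto simp: const3_mult const3_1)

lemma dy_dz_mem_if_dx_eq_0:
  assumes "p \<in> P" "dx p = 0"
  shows "dy p \<in> P" "dz p \<in> P"
proof -
  have "byz s t * dy p \<in> P"
    using ideal_uminus[OF ideal pbr_mem[OF assms(1), of Z]] assms(2) by (simp add: pbr_Z)
  then show "dy p \<in> P" using prime_idealD(3)[OF prime_ideal] byz_notin by blast
  have "byz s t * dz p \<in> P" using pbr_mem[OF assms(1), of Y] assms(2) by (simp add: pbr_Y)
  then show "dz p \<in> P" using prime_idealD(3)[OF prime_ideal] byz_notin by blast
qed

lemma z_poly_mem_imp_0: "[:[:r:]:] \<in> P \<Longrightarrow> r = 0"
proof (induction "degree r" arbitrary: r rule: less_induct)
  case less
  show ?case
  proof (cases "degree r = 0")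
    case True
    then obtain c where "r = [:c:]" by (metis degree_eq_zeroE)
    then show ?thesis using less.prems const3_notin[of c] by (auto simp: const3_def)
  next
    case False
    have "[:[:pderiv r:]:] \<in> P"
      using dy_dz_mem_if_dx_eq_0(2)[OF less.prems] by (simp add: dx_const dz_const map_poly_pCons)
    moreover have "degree (pderiv r) < degree r" using False by (simp add: degree_pderiv)
    ultimately have "pderiv r = 0" using less.hyps by blast
    then show ?thesis using False by (simp add: pderiv_eq_0_iff)
  qed
qed

lemma yz_poly_mem_imp_0: "[:q:] \<in> P \<Longrightarrow> q = 0"
proof (induction "degree q" arbitrary: q rule: less_induct)
  case less
  show ?case
  proof (cases "degree q = 0")
    case True
    then obtain r where "q = [:r:]" by (metis degree_eq_zeroE)
    then show ?thesis using less.prems z_poly_mem_imp_0 by auto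
  next
    case False
    have "[:pderiv q:] \<in> P"
      using dy_dz_mem_if_dx_eq_0(1)[OF less.prems] by (simp add: dx_const dy_const)
    moreover have "degree (pderiv q) < degree q" using False by (simp add: degree_pderiv)
    ultimately have "pderiv q = 0" using less.hyps by blast
    then show ?thesis using False by (simp add: pderiv_eq_0_iff)
  qed
qed

lemma principal_generator:
  assumes "P \<noteq> {0}"
  obtains u where "prime_elem u" "degree u \<ge> 1" "P = principal_ideal u"
proof -
  obtain p where "p \<in> P" "p \<noteq> 0" using assms ideal by (auto simp: is_ideal_def)
  then obtain u0 where u0: "u0 \<in> P" "u0 \<noteq> 0"
    and minimal: "\<And>p. p \<in> P \<Longrightarrow> p \<noteq> 0 \<Longrightarrow> degree u0 \<le> degree p"
    using ex_has_least_nat[of "\<lambda>p. p \<in> P \<and> p \<noteq> 0" p degree] by blast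
  have deg: "degree u0 \<ge> 1"
  proof (rule ccontr)
    assume "\<not> degree u0 \<ge> 1"
    then obtain q where "u0 = [:q:]" by (metis degree_eq_zeroE less_one not_le)
    then show False using u0 yz_poly_mem_imp_0 by auto
  qed
  define u where "u = primitive_part u0"
  have "[:content u0:] \<notin> P" using u0(2) yz_poly_mem_imp_0 content_eq_zero_iff by blast
  moreover have "u0 = [:content u0:] * u" by (simp add: u_def)
  ultimately have u: "u \<in> P" using prime_idealD(3)[OF prime_ideal] u0(1) by metis
  have minimal_u: "\<And>p. p \<in> P \<Longrightarrow> p \<noteq> 0 \<Longrightarrow> degree u \<le> degree p"
    using minimal by (simp add: u_def)
  have "irreducible u"
    by (rule irreducible_of_minimal_degree[OF prime_ideal u _ minimal_u]) (use u0 in \<open>simp add: u_def\<close>)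
  then have prime: "prime_elem u" by (simp add: prime_elem_iff_irreducible)
  moreover have "degree u \<ge> 1" using deg by (simp add: u_def)
  ultimately show ?thesis
    using that principal_ideal_of_minimal_degree[OF ideal u prime _ minimal_u] by blast
qed

end

section \<open>Vanishing Wronskians\<close>

lemma lead_coeff_pderiv:
  fixes a :: "'a::{idom,ring_char_0} poly"
  shows "lead_coeff (pderiv a) = of_nat (degree a) * lead_coeff a"
proof (cases "degree a = 0")
  case False
  then have "Suc (degree a - 1) = degree a" by simp
  then show ?thesis by (simp add: degree_pderiv coeff_pderiv)
qed (simp add: pderiv_eq_0_iff)

lemma wronskian_eq_0_imp_degree_eq:
  fixes a b :: "'a::{idom,ring_char_0} poly"
  assumes a0: "a \<noteq> 0" and b0: "b \<noteq> 0" and w: "b * pderiv a = a * pderiv b"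
  shows "degree a = degree b"
proof (cases "degree a = 0 \<or> degree b = 0")
  case True
  then show ?thesis
  proof
    assume "degree a = 0"
    then have "pderiv a = 0" by (simp add: pderiv_eq_0_iff)
    then have "pderiv b = 0" using w a0 by simp
    then show ?thesis using \<open>degree a = 0\<close> by (simp add: pderiv_eq_0_iff)
  next
    assume "degree b = 0"
    then have "pderiv b = 0" by (simp add: pderiv_eq_0_iff)
    then have "pderiv a = 0" using w b0 by simp
    then show ?thesis using \<open>degree b = 0\<close> by (simp add: pderiv_eq_0_iff)
  qed
next
  case False
  have "lead_coeff (b * pderiv a) = lead_coeff (a * pderiv b)" using w by simp
  then have "(lead_coeff a * lead_coeff b) * of_nat (degree a)
      = (lead_coeff a * lead_coeff b) * of_nat (degree b)"
    by (simp add: lead_coeff_mult lead_coeff_pderiv algebra_simps)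
  moreover have "lead_coeff a * lead_coeff b \<noteq> 0" using a0 b0 by simp
  ultimately show ?thesis by simp
qed

lemma wronskian_eq_0_imp_proportional:
  fixes a b :: "'a::{idom,ring_char_0} poly"
  assumes b0: "b \<noteq> 0" and w: "b * pderiv a = a * pderiv b"
  shows "smult (lead_coeff b) a = smult (lead_coeff a) b"
proof (rule ccontr)
  define g where "g = smult (lead_coeff b) a - smult (lead_coeff a) b"
  assume "\<not> ?thesis"
  then have g0: "g \<noteq> 0" and a0: "a \<noteq> 0" by (auto simp: g_def)
  have "b * pderiv g = g * pderiv b"
    unfolding g_def by (simp add: pderiv_diff pderiv_smult algebra_simps w)
  then have "degree g = degree b" by (rule wronskian_eq_0_imp_degree_eq[OF g0 b0])
  moreover have "coeff g (degree b) = 0"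
    using wronskian_eq_0_imp_degree_eq[OF a0 b0 w] by (simp add: g_def)
  ultimately show False using g0 by (metis leading_coeff_0_iff)
qed

lemma proportionality_factors_wronskian_eq_0:
  fixes a b :: "'a::{idom,ring_char_0} poly poly"
  assumes b0: "b \<noteq> 0" and e: "smult \<beta> a = smult \<alpha> b"
    and w: "b * map_poly pderiv a = a * map_poly pderiv b"
  shows "\<beta> * pderiv \<alpha> = \<alpha> * pderiv \<beta>"
proof -
  note d_smult = map_poly_derivation_smult[OF derivation_pderiv]
  have "smult (pderiv \<beta>) a + smult \<beta> (map_poly pderiv a)
      = smult (pderiv \<alpha>) b + smult \<alpha> (map_poly pderiv b)"
    using arg_cong[OF e, of "map_poly pderiv"] by (simp add: d_smult)
  then have "b * (smult (pderiv \<beta>) a + smult \<beta> (map_poly pderiv a))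
      = b * (smult (pderiv \<alpha>) b + smult \<alpha> (map_poly pderiv b))"
    by simp
  then have "smult (pderiv \<beta>) (b * a) + smult \<beta> (a * map_poly pderiv b)
      = smult (pderiv \<alpha>) (b * b) + smult \<alpha> (b * map_poly pderiv b)"
    using w by (simp add: algebra_simps)
  moreover have "smult \<beta> (a * map_poly pderiv b) = smult \<alpha> (b * map_poly pderiv b)"
    using e by (metis mult_smult_left)
  ultimately have "smult (pderiv \<beta>) (b * a) = smult (pderiv \<alpha>) (b * b)" by simp
  then have "b * (smult (pderiv \<beta>) a - smult (pderiv \<alpha>) b) = 0" by (simp add: algebra_simps)
  then have e': "smult (pderiv \<beta>) a = smult (pderiv \<alpha>) b" using b0 by simp
  have "smult (pderiv \<beta> * \<alpha>) b = smult (pderiv \<beta>) (smult \<beta> a)" using e by simp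
  also have "\<dots> = smult \<beta> (smult (pderiv \<beta>) a)" by (simp add: mult.commute)
  also have "\<dots> = smult (\<beta> * pderiv \<alpha>) b" using e' by simp
  finally have "smult (pderiv \<beta> * \<alpha> - \<beta> * pderiv \<alpha>) b = 0" by (simp add: smult_diff_left)
  then show ?thesis using b0 by (simp add: mult.commute)
qed

lemma wronskians_eq_0_imp_proportional:
  fixes a b :: "'a::field_char_0 poly poly"
  assumes b0: "b \<noteq> 0" and w1: "b * pderiv a = a * pderiv b"
    and w2: "b * map_poly pderiv a = a * map_poly pderiv b"
  shows "\<exists>c. a = smult [:c:] b"
proof -
  define \<alpha> where "\<alpha> = lead_coeff a"
  define \<beta> where "\<beta> = lead_coeff b"
  have e: "smult \<beta> a = smult \<alpha> b"
    unfolding \<alpha>_def \<beta>_def by (rule wronskian_eq_0_imp_proportional[OF b0 w1])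
  have \<beta>0: "\<beta> \<noteq> 0" using b0 by (simp add: \<beta>_def)
  define c where "c = lead_coeff \<alpha> / lead_coeff \<beta>"
  have lc: "lead_coeff \<beta> \<noteq> 0" using \<beta>0 by simp
  have "smult (lead_coeff \<beta>) \<alpha> = smult (lead_coeff \<beta>) (smult c \<beta>)"
    using wronskian_eq_0_imp_proportional[OF \<beta>0 proportionality_factors_wronskian_eq_0[OF b0 e w2]] lc
    by (simp add: c_def)
  then have "\<alpha> = smult c \<beta>" using lc by (rule smult_cancel[rotated])
  then have "smult \<beta> a = smult \<beta> (smult [:c:] b)" using e by (simp add: mult.commute)
  then show ?thesis using \<beta>0 smult_cancel by blast
qed

section \<open>Binary forms in s and t\<close>

definition binform :: "cpoly3 \<Rightarrow> cpoly3 \<Rightarrow> nat \<Rightarrow> (nat \<Rightarrow> complex poly poly) \<Rightarrow> cpoly3" where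
  "binform s t k a = (\<Sum>j\<le>k. [:a j:] * s ^ j * t ^ (k - j))"

definition cbinform :: "cpoly3 \<Rightarrow> cpoly3 \<Rightarrow> nat \<Rightarrow> complex poly \<Rightarrow> cpoly3" where
  "cbinform s t k g = (\<Sum>j\<le>k. const3 (coeff g j) * s ^ j * t ^ (k - j))"

lemma binform_0: "binform s t 0 a = [:a 0:]"
  by (simp add: binform_def)

lemma binform_diff:
  "binform s t k (\<lambda>j. x * a j - y * b j) = [:x:] * binform s t k a - [:y:] * binform s t k b"
proof -
  have "binform s t k (\<lambda>j. x * a j - y * b j)
      = (\<Sum>j\<le>k. [:x:] * ([:a j:] * s^j * t^(k-j)) - [:y:] * ([:b j:] * s^j * t^(k-j)))"
    unfolding binform_def by (intro sum.cong refl) (simp add: algebra_simps smult_diff_left)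
  then show ?thesis by (simp only: sum_subtractf sum_distrib_left binform_def)
qed

lemma binform_eq_power_mult:
  assumes "i \<le> k" "\<And>j. i < j \<Longrightarrow> j \<le> k \<Longrightarrow> a j = 0"
  shows "binform s t k a = t ^ (k - i) * binform s t i a"
proof -
  have "binform s t k a = (\<Sum>j\<le>i. [:a j:] * s ^ j * t ^ (k - j))"
    unfolding binform_def using assms by (intro sum.mono_neutral_right) auto
  also have "\<dots> = (\<Sum>j\<le>i. t ^ (k - i) * ([:a j:] * s ^ j * t ^ (i - j)))"
  proof (intro sum.cong refl)
    fix j
    assume "j \<in> {..i}"
    then have "k - j = (k - i) + (i - j)" using assms(1) by simp
    then show "[:a j:] * s ^ j * t ^ (k - j) = t ^ (k - i) * ([:a j:] * s ^ j * t ^ (i - j))"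
      by (simp only: power_add mult_ac)
  qed
  finally show ?thesis by (simp add: binform_def sum_distrib_left)
qed

lemma cbinform_add: "cbinform s t k (g + h) = cbinform s t k g + cbinform s t k h"
  by (simp add: cbinform_def sum.distrib const3_add[symmetric] algebra_simps)

lemma cbinform_smult: "cbinform s t k (smult c g) = const3 c * cbinform s t k g"
  by (simp add: cbinform_def sum_distrib_left const3_mult[symmetric] algebra_simps)

lemma cbinform_pCons_0: "cbinform s t (Suc k) (pCons 0 h) = s * cbinform s t k h"
  unfolding cbinform_def
  by (subst sum.atMost_Suc_shift) (simp add: const3_0 sum_distrib_left algebra_simps)

lemma cbinform_Suc:
  assumes "coeff h (Suc k) = 0"
  shows "cbinform s t (Suc k) h = t * cbinform s t k h"
proof -
  have "cbinform s t (Suc k) h = (\<Sum>j\<le>k. const3 (coeff h j) * s ^ j * t ^ (Suc k - j))"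
    unfolding cbinform_def by (simp add: assms const3_0)
  also have "\<dots> = (\<Sum>j\<le>k. t * (const3 (coeff h j) * s ^ j * t ^ (k - j)))"
    by (intro sum.cong refl) (simp add: Suc_diff_le algebra_simps)
  finally show ?thesis by (simp add: cbinform_def sum_distrib_left)
qed

text \<open>A complex binary form is a product of linear forms, by the fundamental theorem of algebra.\<close>

lemma prime_dvd_cbinform_imp_dvd_fpencil:
  assumes u: "prime_elem u"
  shows "degree g = k \<Longrightarrow> k \<ge> 1 \<Longrightarrow> u dvd cbinform s t k g \<Longrightarrow> \<exists>r. u dvd fpencil s t 1 r"
proof (induction k arbitrary: g)
  case (Suc n)
  have "\<not> constant (poly g)" using Suc.prems(1) by (simp add: constant_degree)
  then obtain r where "poly g r = 0" using fundamental_theorem_of_algebra by blast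
  then obtain h where gh: "g = [:-r, 1:] * h" by (metis poly_eq_0_iff_dvd dvdE)
  have h0: "h \<noteq> 0" using Suc.prems(1) gh by auto
  have "degree g = degree [:-r, 1:] + degree h"
    unfolding gh by (rule degree_mult_eq) (use h0 in auto)
  then have dh: "degree h = n" using Suc.prems(1) by simp
  have g: "g = smult (- r) h + pCons 0 h" using gh by simp
  have "cbinform s t (Suc n) g = const3 (- r) * (t * cbinform s t n h) + s * cbinform s t n h"
    using dh by (simp only: g cbinform_add cbinform_smult cbinform_pCons_0 cbinform_Suc coeff_eq_0 lessI)
  also have "\<dots> = (s - const3 r * t) * cbinform s t n h"
  proof -
    have "const3 (- r) = - const3 r" by (simp add: const3_def)
    then show ?thesis by (simp add: algebra_simps)
  qed
  also have "s - const3 r * t = fpencil s t 1 r" by (simp add: fpencil_def const3_1)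
  finally have "u dvd fpencil s t 1 r \<or> u dvd cbinform s t n h"
    using Suc.prems(3) u by (simp add: prime_elem_dvd_mult_iff)
  then show ?case
  proof
    assume hu: "u dvd cbinform s t n h"
    show ?case
    proof (cases "n = 0")
      case True
      then have "coeff h 0 \<noteq> 0" using dh h0 by (metis leading_coeff_0_iff)
      then have "is_unit (cbinform s t n h)" using True by (simp add: cbinform_def is_unit_const3)
      then show ?thesis using hu u by (meson dvd_unit_imp_unit prime_elem_not_unit)
    qed (use Suc.IH[OF dh] hu in simp)
  qed blast
qed simp

section \<open>Relations modulo a prime\<close>

text \<open>Induction on \<open>n\<close>: a polynomial with nonzero coefficient at \<open>X^(n-1)\<close> eliminates that
  coefficient from all the others (Gaussian elimination).\<close>

lemma linear_dependence_of_low_degree: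
  fixes r :: "nat \<Rightarrow> 'a::idom poly"
  shows "finite J \<Longrightarrow> card J > n \<Longrightarrow> (\<forall>j\<in>J. \<forall>m\<ge>n. coeff (r j) m = 0) \<Longrightarrow>
    \<exists>b. (\<exists>j\<in>J. b j \<noteq> 0) \<and> (\<Sum>j\<in>J. smult (b j) (r j)) = 0"
proof (induction n arbitrary: J r)
  case 0
  then obtain j where "j \<in> J" by (metis card.empty ex_in_conv less_irrefl)
  have "\<forall>j\<in>J. r j = 0" using "0.prems"(3) by (auto intro: poly_eqI)
  then show ?case using \<open>j \<in> J\<close> by (intro exI[of _ "\<lambda>_. 1"]) auto
next
  case (Suc n)
  show ?case
  proof (cases "\<forall>j\<in>J. coeff (r j) n = 0")
    case True
    then have "\<forall>j\<in>J. \<forall>m\<ge>n. coeff (r j) m = 0"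
      using Suc.prems(3) by (metis Suc_leI le_neq_implies_less)
    then show ?thesis using Suc.IH[OF Suc.prems(1)] Suc.prems(2) by simp
  next
    case False
    then obtain i where i: "i \<in> J" and c: "coeff (r i) n \<noteq> 0" by blast
    define J' where "J' = J - {i}"
    define r' where "r' = (\<lambda>j. smult (coeff (r i) n) (r j) - smult (coeff (r j) n) (r i))"
    have "finite J'" "card J' > n"
      using Suc.prems(1,2) i by (simp_all add: J'_def card_Diff_singleton)
    moreover have "\<forall>j\<in>J'. \<forall>m\<ge>n. coeff (r' j) m = 0"
    proof (intro ballI allI impI)
      fix j m
      assume "j \<in> J'" "m \<ge> n"
      then show "coeff (r' j) m = 0"
        using Suc.prems(3) i by (cases "m = n") (auto simp: r'_def J'_def)
    qed
    ultimately obtain b' where b': "\<exists>j\<in>J'. b' j \<noteq> 0" "(\<Sum>j\<in>J'. smult (b' j) (r' j)) = 0"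
      using Suc.IH by blast
    define b where
      "b = (\<lambda>j. if j = i then - (\<Sum>k\<in>J'. b' k * coeff (r k) n) else coeff (r i) n * b' j)"
    have "(\<Sum>j\<in>J. smult (b j) (r j)) = smult (b i) (r i) + (\<Sum>j\<in>J'. smult (b j) (r j))"
      unfolding J'_def using Suc.prems(1) i by (simp add: sum.remove)
    also have "(\<Sum>j\<in>J'. smult (b j) (r j)) = (\<Sum>j\<in>J'. smult (coeff (r i) n * b' j) (r j))"
      by (intro sum.cong refl) (simp add: b_def J'_def)
    also have "smult (b i) (r i) = - (\<Sum>k\<in>J'. smult (b' k * coeff (r k) n) (r i))"
      by (simp add: b_def smult_sum)
    also have "- (\<Sum>k\<in>J'. smult (b' k * coeff (r k) n) (r i))
        + (\<Sum>j\<in>J'. smult (coeff (r i) n * b' j) (r j)) = (\<Sum>j\<in>J'. smult (b' j) (r' j))"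
      by (simp add: r'_def smult_diff_right sum_subtractf algebra_simps)
    finally have "(\<Sum>j\<in>J. smult (b j) (r j)) = 0" using b'(2) by simp
    moreover have "\<exists>j\<in>J. b j \<noteq> 0" using b'(1) c by (auto simp: b_def J'_def)
    ultimately show ?thesis by blast
  qed
qed

lemma nontrivial_combination_dvd:
  fixes u :: "'a::idom poly" and p :: "nat \<Rightarrow> 'a poly"
  assumes u0: "u \<noteq> 0"
  shows "\<exists>b. (\<exists>j\<le>degree u. b j \<noteq> 0) \<and> u dvd (\<Sum>j\<le>degree u. smult (b j) (p j))"
proof -
  have "\<forall>j. \<exists>A Q. A \<noteq> 0 \<and> smult A (p j) = u * Q + pseudo_mod (p j) u"
    using pseudo_mod(1)[OF u0] by blast
  then obtain A Q where AQ: "\<And>j. A j \<noteq> 0 \<and> smult (A j) (p j) = u * Q j + pseudo_mod (p j) u"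
    by metis
  have "\<forall>j\<in>{..degree u}. \<forall>m\<ge>degree u. coeff (pseudo_mod (p j) u) m = 0"
    using pseudo_mod(2)[OF u0] by (metis coeff_0 coeff_eq_0 order.strict_trans2)
  then obtain b where b: "\<exists>j\<le>degree u. b j \<noteq> 0"
    "(\<Sum>j\<le>degree u. smult (b j) (pseudo_mod (p j) u)) = 0"
    using linear_dependence_of_low_degree[of "{..degree u}" "degree u" "\<lambda>j. pseudo_mod (p j) u"]
    by auto
  have "(\<Sum>j\<le>degree u. smult (b j * A j) (p j))
      = (\<Sum>j\<le>degree u. u * smult (b j) (Q j) + smult (b j) (pseudo_mod (p j) u))"
    by (intro sum.cong refl) (simp only: flip: smult_smult, simp add: AQ smult_add_right)
  also have "\<dots> = u * (\<Sum>j\<le>degree u. smult (b j) (Q j))"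
    using b(2) by (simp add: sum.distrib sum_distrib_left)
  finally have "u dvd (\<Sum>j\<le>degree u. smult (b j * A j) (p j))" by simp
  moreover have "\<exists>j\<le>degree u. b j * A j \<noteq> 0" using b(1) AQ by auto
  ultimately show ?thesis by (intro exI[of _ "\<lambda>j. b j * A j"] conjI)
qed

lemma binform_relation_top:
  assumes u: "prime_elem u" "\<not> u dvd t"
    and R: "u dvd binform s t k a" and nontrivial: "\<exists>j\<le>k. a j \<noteq> 0"
  shows "\<exists>i\<le>k. a i \<noteq> 0 \<and> u dvd binform s t i a"
proof -
  define nonzero where "nonzero = (\<lambda>j. j \<le> k \<and> a j \<noteq> 0)"
  define i where "i = (GREATEST j. nonzero j)"
  have bound: "\<And>j. nonzero j \<Longrightarrow> j \<le> k" by (simp add: nonzero_def)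
  obtain j where "nonzero j" using nontrivial by (auto simp: nonzero_def)
  then have i: "nonzero i" unfolding i_def using bound by (rule GreatestI_nat)
  have "a j = 0" if "i < j" "j \<le> k" for j
  proof (rule ccontr)
    assume "a j \<noteq> 0"
    then have "nonzero j" using that(2) by (simp add: nonzero_def)
    then have "j \<le> i" unfolding i_def using bound by (rule Greatest_le_nat)
    then show False using that(1) by simp
  qed
  then have "binform s t k a = t ^ (k - i) * binform s t i a"
    using i by (subst binform_eq_power_mult[of i]) (simp_all add: nonzero_def)
  then have "u dvd t ^ (k - i) * binform s t i a" using R by simp
  moreover have "\<not> u dvd t ^ (k - i)" using u prime_elem_dvd_power by blast
  ultimately show ?thesis using u(1) i by (auto simp: prime_elem_dvd_mult_iff nonzero_def)
qed

definition minimal_relation ::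
    "cpoly3 \<Rightarrow> cpoly3 \<Rightarrow> cpoly3 \<Rightarrow> nat \<Rightarrow> (nat \<Rightarrow> complex poly poly) \<Rightarrow> bool" where
  "minimal_relation u s t k a \<longleftrightarrow> a k \<noteq> 0 \<and> u dvd binform s t k a
     \<and> (\<forall>k' < k. \<forall>c. u dvd binform s t k' c \<longrightarrow> (\<forall>j\<le>k'. c j = 0))"

lemma minimal_relation_exists:
  assumes u: "prime_elem u" "\<not> u dvd t"
  obtains k a where "minimal_relation u s t k a"
proof -
  have "u \<noteq> 0" using u(1) by auto
  then obtain b where b: "\<exists>j\<le>degree u. b j \<noteq> 0"
    "u dvd (\<Sum>j\<le>degree u. smult (b j) (s ^ j * t ^ (degree u - j)))"
    using nontrivial_combination_dvd[of u "\<lambda>j. s ^ j * t ^ (degree u - j)"] by blast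
  have "u dvd binform s t (degree u) b" using b(2) by (simp add: binform_def mult.assoc)
  then have "\<exists>i\<le>degree u. b i \<noteq> 0 \<and> u dvd binform s t i b"
    using binform_relation_top[OF u _ b(1)] by blast
  then have ex: "\<exists>k a. a k \<noteq> 0 \<and> u dvd binform s t k a" by blast
  define k where "k = (LEAST k. \<exists>a. a k \<noteq> 0 \<and> u dvd binform s t k a)"
  obtain a where a: "a k \<noteq> 0" "u dvd binform s t k a"
    using LeastI_ex[OF ex] unfolding k_def by blast
  have "\<forall>j\<le>k'. c j = 0" if lt: "k' < k" and rel: "u dvd binform s t k' c" for k' c
  proof (rule ccontr)
    assume "\<not> (\<forall>j\<le>k'. c j = 0)"
    then obtain i where "i \<le> k'" "c i \<noteq> 0 \<and> u dvd binform s t i c"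
      using binform_relation_top[OF u rel] by blast
    then have "k \<le> i" unfolding k_def by (metis (mono_tags, lifting) Least_le)
    then show False using \<open>i \<le> k'\<close> lt by simp
  qed
  then have "minimal_relation u s t k a" using a by (simp add: minimal_relation_def)
  then show ?thesis by (rule that)
qed

lemma minimal_relation_degree_pos:
  assumes "minimal_relation u s t k a" "degree u \<ge> 1"
  shows "k \<ge> 1"
proof (rule ccontr)
  assume "\<not> k \<ge> 1"
  then have "k = 0" by simp
  then have "u dvd [:a 0:]" "a 0 \<noteq> 0" using assms(1) by (simp_all add: minimal_relation_def binform_0)
  then show False using dvd_imp_degree_le[of u "[:a 0:]"] assms(2) by simp
qed

lemma binform_relation_derivation:
  assumes E: "derivation E" and Eu: "E u = 0" and E_const: "\<And>q. E [:q:] = ux * [:D q:]"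
    and G: "u dvd t * E s - s * E t" and u: "prime_elem u" "\<not> u dvd t" "\<not> u dvd ux"
    and R: "u dvd binform s t k a"
  shows "u dvd binform s t k (\<lambda>j. D (a j))"
proof -
  define G where "G = t * E s - s * E t"
  define S where "S = (\<Sum>j\<le>k. [:a j:] * (of_nat j * s ^ (j - 1) * t ^ (k - j)))"
  have summand: "t * E ([:a j:] * s ^ j * t ^ (k - j)) = t * ux * ([:D (a j):] * s ^ j * t ^ (k - j))
      + of_nat k * E t * ([:a j:] * s ^ j * t ^ (k - j)) + G * ([:a j:] * (of_nat j * s ^ (j - 1) * t ^ (k - j)))"
    if "j \<le> k" for j
  proof -
    have "t * E ([:a j:] * s ^ j * t ^ (k - j))
        = t * E [:a j:] * (s ^ j * t ^ (k - j)) + [:a j:] * (t * E (s ^ j * t ^ (k - j)))"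
      unfolding mult.assoc[of "[:a j:]"] derivation_mult[OF E] by (simp add: algebra_simps)
    also have "t * E (s ^ j * t ^ (k - j)) = of_nat (j + (k - j)) * E t * (s ^ j * t ^ (k - j))
            + of_nat j * s ^ (j - 1) * t ^ (k - j) * G"
      unfolding G_def by (rule derivation_power_product[OF E])
    also have "j + (k - j) = k" using that by simp
    finally show ?thesis by (simp add: E_const algebra_simps)
  qed
  have "t * E (binform s t k a) = (\<Sum>j\<le>k. t * E ([:a j:] * s ^ j * t ^ (k - j)))"
    by (simp add: binform_def derivation_sum[OF E] sum_distrib_left)
  also have "\<dots> = (\<Sum>j\<le>k. t * ux * ([:D (a j):] * s ^ j * t ^ (k - j))
      + of_nat k * E t * ([:a j:] * s ^ j * t ^ (k - j)) + G * ([:a j:] * (of_nat j * s ^ (j - 1) * t ^ (k - j))))"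
    by (intro sum.cong refl summand) simp
  also have "\<dots> = t * ux * binform s t k (\<lambda>j. D (a j)) + of_nat k * E t * binform s t k a + G * S"
    by (simp add: binform_def S_def sum.distrib sum_distrib_left)
  finally have eq: "t * E (binform s t k a)
      = t * ux * binform s t k (\<lambda>j. D (a j)) + of_nat k * E t * binform s t k a + G * S" .
  from R obtain q where q: "binform s t k a = u * q" by (auto simp: dvd_def)
  have "u dvd t * E (binform s t k a)" unfolding q by (simp add: derivation_mult[OF E] Eu)
  moreover have "u dvd of_nat k * E t * binform s t k a" using R by simp
  moreover have "u dvd G * S" using G by (simp add: G_def)
  ultimately have "u dvd t * ux * binform s t k (\<lambda>j. D (a j))"
    unfolding eq by (metis dvd_add_left_iff dvd_add_right_iff)
  then show ?thesis using u by (simp add: prime_elem_dvd_mult_iff)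
qed

lemma minimal_relation_derivation_proportional:
  assumes min: "minimal_relation u s t k a" and k: "k \<ge> 1" and u: "prime_elem u" "\<not> u dvd t"
    and E: "derivation E" "E u = 0" "\<And>q. E [:q:] = ux * [:D q:]" "u dvd t * E s - s * E t"
    and ux: "\<not> u dvd ux" and j: "j \<le> k"
  shows "a k * D (a j) = D (a k) * a j"
proof -
  have R: "u dvd binform s t k a" using min by (simp add: minimal_relation_def)
  define b where "b = (\<lambda>j. a k * D (a j) - D (a k) * a j)"
  have "u dvd [:a k:] * binform s t k (\<lambda>j. D (a j)) - [:D (a k):] * binform s t k a"
    using binform_relation_derivation[OF E u ux R] R by (intro dvd_diff dvd_mult)
  then have "u dvd binform s t k b" unfolding b_def binform_diff .
  moreover have "b k = 0" by (simp add: b_def mult.commute)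
  moreover have "binform s t k b = t ^ (k - (k - 1)) * binform s t (k - 1) b"
  proof (rule binform_eq_power_mult)
    show "b i = 0" if "k - 1 < i" "i \<le> k" for i
    proof -
      have "i = k" using that k by linarith
      then show ?thesis using \<open>b k = 0\<close> by simp
    qed
  qed simp
  ultimately have "u dvd t * binform s t (k - 1) b" using k by simp
  then have "u dvd binform s t (k - 1) b" using u by (simp add: prime_elem_dvd_mult_iff)
  moreover have "k - 1 < k" using k by simp
  ultimately have "\<forall>i\<le>k - 1. b i = 0" using min unfolding minimal_relation_def by blast
  then have "b j = 0" using j \<open>b k = 0\<close> by (cases "j = k") auto
  then show ?thesis by (simp add: b_def)
qed

section \<open>Darboux primes divide a member of the pencil\<close>

text \<open>The derivations \<open>u_x \<partial>_y - u_y \<partial>_x\<close> and \<open>u_x \<partial>_z - u_z \<partial>_x\<close> kill \<open>u\<close>, and \<open>t E s - s E t\<close>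
  is \<open>{z, u}\<close> resp. \<open>-{y, u}\<close>.\<close>

lemma minimal_relation_constant_ratios:
  assumes u: "prime_elem u" "degree u \<ge> 1" "\<not> u dvd t" and min: "minimal_relation u s t k a"
    and hamiltonian: "\<And>b. u dvd pbr s t b u" and j: "j \<le> k"
  shows "\<exists>c. a j = smult [:c:] (a k)"
proof -
  have k: "k \<ge> 1" by (rule minimal_relation_degree_pos[OF min u(2)])
  have ux: "\<not> u dvd dx u"
  proof
    assume "u dvd dx u"
    moreover have "dx u \<noteq> 0" using u(2) by (simp add: dx_def pderiv_eq_0_iff)
    ultimately have "degree u \<le> degree (dx u)" by (rule dvd_imp_degree_le)
    then show False using u(2) by (simp add: dx_def degree_pderiv)
  qed
  define E1 where "E1 = (\<lambda>q. dx u * dy q + (- dy u) * dx q)"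
  define E2 where "E2 = (\<lambda>q. dx u * dz q + (- dz u) * dx q)"
  have E1: "derivation E1" "E1 u = 0" "\<And>q. E1 [:q:] = dx u * [:pderiv q:]"
    unfolding E1_def
    by (intro derivation_plus derivation_cmult derivation_dx derivation_dy)
       (simp_all add: dy_const dx_const algebra_simps)
  have E2: "derivation E2" "E2 u = 0" "\<And>q. E2 [:q:] = dx u * [:map_poly pderiv q:]"
    unfolding E2_def
    by (intro derivation_plus derivation_cmult derivation_dx derivation_dz)
       (simp_all add: dz_const dx_const algebra_simps)
  have "t * E1 s - s * E1 t = pbr s t Z u"
    by (simp add: E1_def pbr_Z bzx_def byz_def algebra_simps)
  then have G1: "u dvd t * E1 s - s * E1 t" using hamiltonian[of Z] by simp
  have "t * E2 s - s * E2 t = - pbr s t Y u"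
    by (simp add: E2_def pbr_Y bxy_def byz_def algebra_simps)
  then have G2: "u dvd t * E2 s - s * E2 t" using hamiltonian[of Y] by simp
  have "a k * pderiv (a j) = pderiv (a k) * a j"
    by (rule minimal_relation_derivation_proportional[OF min k u(1,3) E1 G1 ux j])
  moreover have "a k * map_poly pderiv (a j) = map_poly pderiv (a k) * a j"
    by (rule minimal_relation_derivation_proportional[OF min k u(1,3) E2 G2 ux j])
  moreover have "a k \<noteq> 0" using min by (simp add: minimal_relation_def)
  ultimately show ?thesis by (intro wronskians_eq_0_imp_proportional) (simp_all add: mult.commute)
qed

lemma dvd_fpencil_if_constant_ratios:
  assumes u: "prime_elem u" "degree u \<ge> 1"
    and R: "u dvd binform s t k a" "a k \<noteq> 0" "k \<ge> 1"
    and ratios: "\<And>j. j \<le> k \<Longrightarrow> \<exists>c. a j = smult [:c:] (a k)"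
  shows "\<exists>r. u dvd fpencil s t 1 r"
proof -
  obtain c where c: "\<And>j. j \<le> k \<Longrightarrow> a j = smult [:c j:] (a k)" using ratios by metis
  have "smult ([:c k:] - 1) (a k) = 0" using c[of k] by (simp add: smult_diff_left)
  then have ck: "c k = 1" using R(2) by (simp add: one_pCons)
  define g where "g = (\<Sum>j\<le>k. monom (c j) j)"
  have coeff_g: "coeff g j = (if j \<le> k then c j else 0)" for j
    by (simp add: g_def coeff_sum coeff_monom)
  have "degree g = k"
  proof (rule antisym)
    show "degree g \<le> k" by (rule degree_le) (simp add: coeff_g)
    show "k \<le> degree g" by (rule le_degree) (simp add: coeff_g ck)
  qed
  have "binform s t k a = [:a k:] * cbinform s t k g"
    unfolding binform_def cbinform_def sum_distrib_left
  proof (intro sum.cong refl)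
    fix j
    assume "j \<in> {..k}"
    then show "[:a j:] * s ^ j * t ^ (k - j) = [:a k:] * (const3 (coeff g j) * s ^ j * t ^ (k - j))"
      using c[of j] by (simp add: coeff_g const3_def)
  qed
  then have "u dvd [:a k:] * cbinform s t k g" using R(1) by simp
  moreover have "\<not> u dvd [:a k:]"
    using u(2) dvd_imp_degree_le[of u "[:a k:]"] R(2) by auto
  ultimately have "u dvd cbinform s t k g" using u(1) prime_elem_dvd_mult_iff by blast
  then show ?thesis by (rule prime_dvd_cbinform_imp_dvd_fpencil[OF u(1) \<open>degree g = k\<close> R(3)])
qed

lemma darboux_prime_dvd_fpencil:
  assumes u: "prime_elem u" "degree u \<ge> 1" and hamiltonian: "\<And>b. u dvd pbr s t b u"
  shows "\<exists>l m. (l, m) \<noteq> (0, 0) \<and> u dvd fpencil s t l m"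
proof (cases "u dvd t")
  case True
  then have "u dvd fpencil s t 0 1" by (simp add: fpencil_def const3_0 const3_1)
  then show ?thesis by (intro exI[of _ 0] exI[of _ 1]) simp
next
  case False
  obtain k a where min: "minimal_relation u s t k a"
    using minimal_relation_exists[OF u(1) False] by blast
  then have R: "u dvd binform s t k a" "a k \<noteq> 0" by (simp_all add: minimal_relation_def)
  have "\<exists>r. u dvd fpencil s t 1 r"
    by (rule dvd_fpencil_if_constant_ratios[OF u R minimal_relation_degree_pos[OF min u(2)]
          minimal_relation_constant_ratios[OF u False min hamiltonian]])
  then obtain r where "u dvd fpencil s t 1 r" by blast
  then show ?thesis by (intro exI[of _ 1] exI[of _ r]) simp
qed

lemma byz_eq_0_if_fpencil_eq_0:
  assumes "fpencil s t l m = 0" "(l, m) \<noteq> (0, 0)"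
  shows "byz s t = 0"
proof (cases "l = 0")
  case True
  then have "const3 m * t = 0" "m \<noteq> 0" using assms by (simp_all add: fpencil_def const3_0)
  then have "t = 0" by (simp add: const3_eq_0_iff)
  then show ?thesis by (simp add: byz_def derivation_0[OF derivation_dx])
next
  case False
  have "const3 (1 / l) * (const3 l * s) = const3 (1 / l) * (const3 m * t)"
    using assms(1) by (simp add: fpencil_def)
  then have s: "s = const3 (m / l) * t"
    using False by (simp add: mult.assoc[symmetric] const3_mult const3_1)
  show ?thesis
    unfolding byz_def s derivation_mult[OF derivation_dx] dx_const3 by (simp add: algebra_simps)
qed

lemma pencil_factor_ideal_if_byz_notin:
  assumes poisson: "poisson_prime s t P" and "P \<noteq> {0}" and byz: "byz s t \<notin> P"
  shows "pencil_factor_ideal s t P"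
proof -
  interpret poisson_prime_byz_notin s t P by standard (fact poisson byz)+
  obtain u where u: "prime_elem u" "degree u \<ge> 1" and P: "P = principal_ideal u"
    using principal_generator[OF \<open>P \<noteq> {0}\<close>] by blast
  have "u dvd pbr s t b u" for b
    using poisson P by (simp add: poisson_prime_def mem_principal_ideal)
  then obtain l m where lm: "(l, m) \<noteq> (0, 0)" and f: "u dvd fpencil s t l m"
    using darboux_prime_dvd_fpencil[OF u] by blast
  have "fpencil s t l m \<noteq> 0"
    using byz_eq_0_if_fpencil_eq_0[OF _ lm] byz poisson
    by (auto simp: poisson_prime_def is_prime_ideal_def is_ideal_def)
  moreover have "\<not> is_unit (fpencil s t l m)"
    using f u(1) by (meson dvd_unit_imp_unit prime_elem_not_unit)
  moreover have "irreducible u" using u(1) by (simp add: prime_elem_iff_irreducible)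
  ultimately show ?thesis unfolding pencil_factor_ideal_def using lm f P by blast
qed

lemma (in bracket_reversing_involution) pencil_factor_ideal_if_image_byz_notin:
  assumes "poisson_prime s t P" and "P \<noteq> {0}" and "byz (F s) (F t) \<notin> F ` P"
  shows "pencil_factor_ideal s t P"
proof -
  have "poisson_prime (F s) (F t) (F ` P)" by (rule poisson_prime_image[OF assms(1)])
  moreover have "F ` P \<noteq> {0}" using assms(2) by (simp add: image_eq_zero_iff)
  ultimately have "pencil_factor_ideal (F s) (F t) (F ` P)"
    using assms(3) by (rule pencil_factor_ideal_if_byz_notin)
  then show ?thesis by (rule pencil_factor_ideal_image)
qed

lemma pencil_factor_ideal_if_not_residually_null:
  assumes poisson: "poisson_prime s t P" and "P \<noteq> {0}" and "\<not> residually_null s t P"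
  shows "pencil_factor_ideal s t P"
proof -
  have "byz s t \<notin> P \<or> bzx s t \<notin> P \<or> bxy s t \<notin> P"
    using assms(3) by (auto simp: residually_null_def pbr_XY pbr_YZ pbr_ZX)
  then show ?thesis
  proof (elim disjE)
    assume "byz s t \<notin> P"
    then show ?thesis using pencil_factor_ideal_if_byz_notin assms(1,2) by blast
  next
    assume "bzx s t \<notin> P"
    then have "byz (swap_xy s) (swap_xy t) \<notin> swap_xy ` P"
      by (simp add: byz_swap_xy swap_xy.mem_image_iff swap_xy_swap_xy)
    then show ?thesis using swap_xy.pencil_factor_ideal_if_image_byz_notin assms(1,2) by blast
  next
    assume "bxy s t \<notin> P"
    then have "byz (swap_xz s) (swap_xz t) \<notin> swap_xz ` P"
      by (simp add: byz_swap_xz swap_xz.mem_image_iff swap_xz_swap_xz)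
    then show ?thesis using swap_xz.pencil_factor_ideal_if_image_byz_notin assms(1,2) by blast
  qed
qed

theorem theorem3p8:
  fixes s t :: cpoly3
  assumes "s \<noteq> 0" and "t \<noteq> 0" and "coprime s t"
  shows "poisson_prime s t P \<longleftrightarrow>
           P = {0}
         \<or> (poisson_prime s t P \<and> residually_null s t P)
         \<or> (\<exists>l m u. (l, m) \<noteq> (0, 0) \<and> fpencil s t l m \<noteq> 0 \<and> \<not> is_unit (fpencil s t l m)
                  \<and> irreducible u \<and> u dvd fpencil s t l m \<and> P = principal_ideal u)"
  unfolding pencil_factor_ideal_def[symmetric]
proof
  assume "poisson_prime s t P"
  then show "P = {0} \<or> poisson_prime s t P \<and> residually_null s t P \<or> pencil_factor_ideal s t P"
    using pencil_factor_ideal_if_not_residually_null by blast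
next
  assume "P = {0} \<or> poisson_prime s t P \<and> residually_null s t P \<or> pencil_factor_ideal s t P"
  then show "poisson_prime s t P"
    using poisson_prime_zero poisson_prime_pencil_factor unfolding pencil_factor_ideal_def by blast
qed

end
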